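(* Let $M=(\Gamma,\Sigma,P,\delta)$ be a linear bounded deterministic Turing machine, let $x\in\Sigma^*$ be an input with $|x|=n\geq 1$, and let $Sys_M$ be the interaction system associated with $M$ and $x$ as defined in the context. Then $M$ accepts $x$ (i.e. $M$ started on $x$ halts in state $p^Y$) if and only if some global state $q=(q_0,\dots,q_{n+1})$ of $Sys_M$ is reachable such that $q_i=(p^Y,\gamma)$ for some $i\in\{0,\dots,n+1\}$ and some $\gamma\in\Gamma$.
   Context: Interaction systems. Let $K=\{1,\dots,n\}$ (or any finite index set) be a set of components and $\{A_i\}_{i\in K}$ a family of pairwise disjoint finite sets of ports. An interaction is a nonempty set $\alpha\subseteq\bigcup_{i\in K}A_i$ with $|\alpha\cap A_i|\le 1$ for all $i$. An interaction set $Int$ is a set of interactions such that every port occurs in at least one interaction; $IM=(K,\{A_i\}_{i\in K},Int)$ is an interaction model. An interaction system is $Sys=(IM,\{T_i\}_{i\in K})$ where $T_i=(Q_i,A_i,\to_i,q_i^0)$ is a labeled transition system with finite state set $Q_i$, transition relation $\to_i\subseteq Q_i\times A_i\times Q_i$ and initial state $q_i^0$. Its global behavior is the transition system with states $Q=\prod_{i\in K}Q_i$, initial state $q^0=(q_i^0)_{i\in K}$, and $q\xrightarrow{\alpha}q'$ (for $\alpha\in Int$) iff for all $i\in K$: if $\alpha\cap A_i=\{a_i\}$ then $(q_i,a_i,q_i')\in\to_i$, and if $\alpha\cap A_i=\emptyset$ then $q_i=q_i'$. A global state is reachable if there is a path from $q^0$ to it in the global behavior. Turing machines. A DTM is $M=(\Gamma,\Sigma,P,\delta)$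 with finite tape alphabet $\Gamma$, input alphabet $\Sigma\subseteq\Gamma$, blank $b\in\Gamma\setminus\Sigma$, finite state set $P$ containing initial state $p^0$ and halt states $p^Y,p^N$, and $\delta:(P\setminus\{p^Y,p^N\})\times\Gamma\to P\times\Gamma\times\{-1,+1\}$. The tape is two-way infinite with cells indexed by integers; input $x=x^1\cdots x^n$ is written on cells $1,\dots,n$ (all other cells blank), the machine starts in $p^0$ with head on cell $1$. $M$ is linear bounded if no computation on an input of length $n$ uses cells other than $0,\dots,n+1$. Construction of $Sys_M$. Components $K=\{0,\dots,n+1\}$ (one per tape cell). Let $P'=P\setminus\{p^Y,p^N\}$. For $1\le i\le n$: $A_i=\{(p,\gamma)_i^1,(p,\gamma)_i^2 : p\in P',\gamma\in\Gamma\}$. $A_0=\{(p,\gamma)_0^1: p\in P',\gamma\in\Gamma,\ \delta(p,\gamma)\text{ has direction }+1\}\cup\{(p,\gamma)_0^2: p\in P',\gamma\in\Gamma,\ \delta(p,\gamma)\text{ has direction }-1\}$, and $A_{n+1}=\{(p,\gamma)_{n+1}^1: \delta(p,\gamma)\text{ has direction }-1\}\cup\{(p,\gamma)_{n+1}^2: \delta(p,\gamma)\text{ has direction }+1\}$ (with $p\in P',\gamma\in\Gamma$). Interactions: $Int=\{\{(p,\gamma)_i^1,(p,\gamma)_{i+T}^2\} : p\in P',\gamma\in\Gamma,\ \delta(p,\gamma)=(p',\gamma',T),\ 0\le i\le n+1,\ 0\le i+T\le n+1\}$. For each $i$, $Q_i=\{(p,\gamma): p\in P\cup\{s\},\gamma\in\Gamma\}$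 where $s\notin P$ is a fresh symbol ($(s,\gamma)$ means cell content $\gamma$, head elsewhere; $(p,\gamma)$ with $p\in P$ means head on this cell in state $p$ reading $\gamma$). Initial states: $q_0^0=(s,b)$, $q_1^0=(p^0,x^1)$, $q_i^0=(s,x^i)$ for $2\le i\le n$, $q_{n+1}^0=(s,b)$. Transitions $\to_i$ (only for ports belonging to $A_i$): (a) $(p,\gamma)\xrightarrow{(p,\gamma)_i^1}(s,\gamma')$ whenever $p\in P'$ and $\delta(p,\gamma)=(p',\gamma',T)$ for some $p',T$; (b) $(s,\tilde\gamma)\xrightarrow{(p,\gamma)_i^2}(p',\tilde\gamma)$ for all $\tilde\gamma\in\Gamma$ whenever $p\in P'$ and $\delta(p,\gamma)=(p',\gamma',T)$ for some $\gamma',T$. *)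

theory Defs
  imports Main "HOL-Library.FuncSet"
begin

definition global_step ::
  "'k set \<Rightarrow> ('k \<Rightarrow> 'a set) \<Rightarrow> 'a set set \<Rightarrow> ('k \<Rightarrow> 's set) \<Rightarrow> ('k \<Rightarrow> ('s \<times> 'a \<times> 's) set)
    \<Rightarrow> 'a set \<Rightarrow> (('k \<Rightarrow> 's) \<times> ('k \<Rightarrow> 's)) set" where
  "global_step K A Inter_set Q Tr \<alpha> =
     {(q, q'). \<alpha> \<in> Inter_set \<and> q \<in> PiE K Q \<and> q' \<in> PiE K Q \<and>
        (\<forall>i\<in>K. (\<forall>a. \<alpha> \<inter> A i = {a} \<longrightarrow> (q i, a, q' i) \<in> Tr i) \<and>
                 (\<alpha> \<inter> A i = {} \<longrightarrow> q i = q' i))}"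

definition global_reachable ::
  "'k set \<Rightarrow> ('k \<Rightarrow> 'a set) \<Rightarrow> 'a set set \<Rightarrow> ('k \<Rightarrow> 's set) \<Rightarrow> ('k \<Rightarrow> ('s \<times> 'a \<times> 's) set)
    \<Rightarrow> ('k \<Rightarrow> 's) \<Rightarrow> ('k \<Rightarrow> 's) \<Rightarrow> bool" where
  "global_reachable K A Inter_set Q Tr q0 q \<longleftrightarrow>
     (q0, q) \<in> (\<Union>\<alpha>\<in>Inter_set. global_step K A Inter_set Q Tr \<alpha>)\<^sup>*"

text \<open>A DTM: tape alphabet G (Gamma), input alphabet S (Sigma), blank b, state set P with
  initial state p0 and halting states pY, pN, transition function d, given as a total HOL
  function that is only relevant on (P - {pY,pN}) \<times> G.\<close>

definition is_DTM ::
  "'g set \<Rightarrow> 'g set \<Rightarrow> 'g \<Rightarrow> 'p set \<Rightarrow> 'p \<Rightarrow> 'p \<Rightarrow> 'p \<Rightarrow> ('p \<Rightarrow> 'g \<Rightarrow> 'p \<times> 'g \<times> int) \<Rightarrow> bool" where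
  "is_DTM G S b P p0 pY pN d \<longleftrightarrow>
     finite G \<and> S \<subseteq> G \<and> b \<in> G \<and> b \<notin> S \<and> finite P \<and> p0 \<in> P \<and> pY \<in> P \<and> pN \<in> P \<and>
     (\<forall>p \<in> P - {pY, pN}. \<forall>g \<in> G.
        fst (d p g) \<in> P \<and> fst (snd (d p g)) \<in> G \<and> snd (snd (d p g)) \<in> {-1, 1})"

type_synonym ('p, 'g) config = "'p \<times> (int \<Rightarrow> 'g) \<times> int"

definition tm_step ::
  "'p \<Rightarrow> 'p \<Rightarrow> ('p \<Rightarrow> 'g \<Rightarrow> 'p \<times> 'g \<times> int) \<Rightarrow> (('p, 'g) config \<times> ('p, 'g) config) set" where
  "tm_step pY pN d =
     {((p, t, h), (p', t', h')). p \<noteq> pY \<and> p \<noteq> pN \<and>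
        p' = fst (d p (t h)) \<and> t' = t(h := fst (snd (d p (t h)))) \<and>
        h' = h + snd (snd (d p (t h)))}"

definition tm_init :: "'g \<Rightarrow> 'p \<Rightarrow> 'g list \<Rightarrow> ('p, 'g) config" where
  "tm_init b p0 x =
     (p0, (\<lambda>c. if 1 \<le> c \<and> c \<le> int (length x) then x ! (nat c - 1) else b), 1)"

text \<open>M accepts x: the computation on x reaches (and hence halts in) the state pY.\<close>
definition tm_accepts ::
  "'g \<Rightarrow> 'p \<Rightarrow> 'p \<Rightarrow> 'p \<Rightarrow> ('p \<Rightarrow> 'g \<Rightarrow> 'p \<times> 'g \<times> int) \<Rightarrow> 'g list \<Rightarrow> bool" where
  "tm_accepts b p0 pY pN d x \<longleftrightarrow>
     (\<exists>t h. (tm_init b p0 x, (pY, t, h)) \<in> (tm_step pY pN d)\<^sup>*)"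

definition linear_bounded ::
  "'g set \<Rightarrow> 'g \<Rightarrow> 'p \<Rightarrow> 'p \<Rightarrow> 'p \<Rightarrow> ('p \<Rightarrow> 'g \<Rightarrow> 'p \<times> 'g \<times> int) \<Rightarrow> bool" where
  "linear_bounded S b p0 pY pN d \<longleftrightarrow>
     (\<forall>x \<in> lists S. \<forall>p t h. (tm_init b p0 x, (p, t, h)) \<in> (tm_step pY pN d)\<^sup>* \<longrightarrow>
        0 \<le> h \<and> h \<le> int (length x) + 1)"

text \<open>Components are 0..n+1. A port (p,g)_i^j is encoded as the tuple (p, g, i, j), j \<in> {1,2}.
  A local state (s, g) is encoded as (None, g), a local state (p, g) with p \<in> P as (Some p, g).\<close>

type_synonym ('p, 'g) port = "'p \<times> 'g \<times> nat \<times> nat"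
type_synonym ('p, 'g) lstate = "'p option \<times> 'g"

definition sysM_ports ::
  "'g set \<Rightarrow> 'p set \<Rightarrow> 'p \<Rightarrow> 'p \<Rightarrow> ('p \<Rightarrow> 'g \<Rightarrow> 'p \<times> 'g \<times> int) \<Rightarrow> nat \<Rightarrow> nat \<Rightarrow> ('p, 'g) port set" where
  "sysM_ports G P pY pN d n i =
     (if 1 \<le> i \<and> i \<le> n then
        {(p, g, i, j) | p g j. p \<in> P - {pY, pN} \<and> g \<in> G \<and> j \<in> {1, 2}}
      else if i = 0 then
        {(p, g, 0, 1) | p g. p \<in> P - {pY, pN} \<and> g \<in> G \<and> snd (snd (d p g)) = 1} \<union>
        {(p, g, 0, 2) | p g. p \<in> P - {pY, pN} \<and> g \<in> G \<and> snd (snd (d p g)) = -1}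
      else if i = n + 1 then
        {(p, g, n + 1, 1) | p g. p \<in> P - {pY, pN} \<and> g \<in> G \<and> snd (snd (d p g)) = -1} \<union>
        {(p, g, n + 1, 2) | p g. p \<in> P - {pY, pN} \<and> g \<in> G \<and> snd (snd (d p g)) = 1}
      else {})"

definition sysM_Int ::
  "'g set \<Rightarrow> 'p set \<Rightarrow> 'p \<Rightarrow> 'p \<Rightarrow> ('p \<Rightarrow> 'g \<Rightarrow> 'p \<times> 'g \<times> int) \<Rightarrow> nat \<Rightarrow> ('p, 'g) port set set" where
  "sysM_Int G P pY pN d n =
     {{(p, g, i, 1), (p, g, nat (int i + T), 2)} | p g i T.
        p \<in> P - {pY, pN} \<and> g \<in> G \<and> T = snd (snd (d p g)) \<and>
        i \<le> n + 1 \<and> 0 \<le> int i + T \<and> int i + T \<le> int n + 1}"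

definition sysM_Q :: "'g set \<Rightarrow> 'p set \<Rightarrow> nat \<Rightarrow> ('p, 'g) lstate set" where
  "sysM_Q G P i = {(s, g). s \<in> insert None (Some ` P) \<and> g \<in> G}"

definition sysM_trans ::
  "'g set \<Rightarrow> 'p set \<Rightarrow> 'p \<Rightarrow> 'p \<Rightarrow> ('p \<Rightarrow> 'g \<Rightarrow> 'p \<times> 'g \<times> int) \<Rightarrow> nat \<Rightarrow> nat
     \<Rightarrow> (('p, 'g) lstate \<times> ('p, 'g) port \<times> ('p, 'g) lstate) set" where
  "sysM_trans G P pY pN d n i =
     {((Some p, g), (p, g, i, 1), (None, fst (snd (d p g)))) | p g.
        p \<in> P - {pY, pN} \<and> g \<in> G \<and> (p, g, i, 1) \<in> sysM_ports G P pY pN d n i} \<union>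
     {((None, g'), (p, g, i, 2), (Some (fst (d p g)), g')) | p g g'.
        p \<in> P - {pY, pN} \<and> g \<in> G \<and> g' \<in> G \<and> (p, g, i, 2) \<in> sysM_ports G P pY pN d n i}"

definition sysM_init :: "'g \<Rightarrow> 'p \<Rightarrow> 'g list \<Rightarrow> nat \<Rightarrow> ('p, 'g) lstate" where
  "sysM_init b p0 x i =
     (let n = length x in
      if i = 0 then (None, b)
      else if i = 1 then (Some p0, x ! 0)
      else if i \<le> n then (None, x ! (i - 1))
      else if i = n + 1 then (None, b)
      else undefined)"

end

theory Submission
  imports Defs
begin

text \<open>Encode a configuration (p, t, h) of M as the global state whose component i is
  (Some p, t i) if i = h and (None, t i) otherwise. A step of M is then simulated by exactly one
  interaction: the component under the head sends, writing the new symbol and releasing the head,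
  and its neighbour in the direction of movement receives the new state. Conversely, from an
  encoded configuration only the interaction matching the head's state and symbol is enabled,
  and it leads to the encoding of the successor. Since the head of a linear bounded machine
  stays on the components 0..n+1, the reachable global states are exactly the encodings of the
  reachable configurations, and these show a component in state pY exactly when M reaches pY.\<close>

lemma rtrancl_simulation_iff:
  assumes "\<And>c q'. (c0, c) \<in> A\<^sup>* \<Longrightarrow> (f c, q') \<in> B \<longleftrightarrow> (\<exists>c'. (c, c') \<in> A \<and> q' = f c')"
  shows "(f c0, q) \<in> B\<^sup>* \<longleftrightarrow> (\<exists>c. (c0, c) \<in> A\<^sup>* \<and> q = f c)"
proof
  assume "(f c0, q) \<in> B\<^sup>*"
  then show "\<exists>c. (c0, c) \<in> A\<^sup>* \<and> q = f c"
  proof (induction rule: rtrancl_induct)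
    case base
    then show ?case by blast
  next
    case (step q q')
    then obtain c where c: "(c0, c) \<in> A\<^sup>*" "q = f c" by blast
    with step.hyps(2) assms obtain c' where "(c, c') \<in> A" "q' = f c'" by blast
    with c show ?case by (blast intro: rtrancl.rtrancl_into_rtrancl)
  qed
next
  assume "\<exists>c. (c0, c) \<in> A\<^sup>* \<and> q = f c"
  then obtain c where "(c0, c) \<in> A\<^sup>*" and "q = f c" by blast
  then show "(f c0, q) \<in> B\<^sup>*"
  proof (induction c arbitrary: q rule: rtrancl_induct)
    case base
    then show ?case by simp
  next
    case (step c c')
    then have "(f c, f c') \<in> B" using assms by blast
    with step show ?case by (meson rtrancl.rtrancl_into_rtrancl)
  qed
qed

lemma tm_step_iff:
  "((p, t, h), c') \<in> tm_step pY pN d \<longleftrightarrow> p \<noteq> pY \<and> p \<noteq> pN \<and>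
     c' = (fst (d p (t h)), t(h := fst (snd (d p (t h)))), h + snd (snd (d p (t h))))"
  unfolding tm_step_def by auto

(* undefined outside the components 0..n+1, as membership in PiE requires *)
fun config_state :: "nat \<Rightarrow> ('p, 'g) config \<Rightarrow> nat \<Rightarrow> ('p, 'g) lstate" where
  "config_state n (p, t, h) i =
     (if i \<le> n + 1 then (if int i = h then Some p else None, t (int i)) else undefined)"

lemma config_state_PiE:
  assumes "p \<in> P" and "\<And>k. t k \<in> G"
  shows "config_state n (p, t, h) \<in> PiE {0..n + 1} (sysM_Q G P)"
  using assms unfolding sysM_Q_def PiE_def extensional_def by auto

lemma sysM_ports_index: "a \<in> sysM_ports G P pY pN d n k \<Longrightarrow> fst (snd (snd a)) = k"
  unfolding sysM_ports_def by (auto split: if_splits)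

lemma sysM_trans_send_iff:
  "(s, (p, g, i, 1), s') \<in> sysM_trans G P pY pN d n i \<longleftrightarrow>
    s = (Some p, g) \<and> s' = (None, fst (snd (d p g))) \<and> p \<in> P - {pY, pN} \<and> g \<in> G
     \<and> (p, g, i, 1) \<in> sysM_ports G P pY pN d n i"
  unfolding sysM_trans_def by auto

lemma sysM_trans_receive_iff:
  "(s, (p, g, i, 2), s') \<in> sysM_trans G P pY pN d n i \<longleftrightarrow>
    (\<exists>g'. s = (None, g') \<and> s' = (Some (fst (d p g)), g') \<and> g' \<in> G) \<and> p \<in> P - {pY, pN} \<and> g \<in> G
     \<and> (p, g, i, 2) \<in> sysM_ports G P pY pN d n i"
  unfolding sysM_trans_def by auto

locale dtm =
  fixes G S :: "'g set" and b :: 'g and P :: "'p set" and p0 pY pN :: 'p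
    and d :: "'p \<Rightarrow> 'g \<Rightarrow> 'p \<times> 'g \<times> int"
  assumes is_DTM: "is_DTM G S b P p0 pY pN d"
begin

lemma transition_closed:
  assumes "p \<in> P - {pY, pN}" and "g \<in> G"
  shows "fst (d p g) \<in> P" and "fst (snd (d p g)) \<in> G" and "snd (snd (d p g)) \<in> {-1, 1}"
  using is_DTM assms unfolding is_DTM_def by blast+

definition head_move :: "nat \<Rightarrow> 'p \<Rightarrow> 'g \<Rightarrow> nat \<Rightarrow> nat \<Rightarrow> bool" where
  "head_move n p g i j \<longleftrightarrow> p \<in> P - {pY, pN} \<and> g \<in> G \<and> i \<le> n + 1 \<and> j \<le> n + 1 \<and>
     int j = int i + snd (snd (d p g))"

lemma head_move_ports:
  assumes "head_move n p g i j"
  shows "i \<noteq> j" and "(p, g, i, 1) \<in> sysM_ports G P pY pN d n i"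
    and "(p, g, j, 2) \<in> sysM_ports G P pY pN d n j"
proof -
  have "snd (snd (d p g)) \<in> {-1, 1}"
    using assms transition_closed(3) unfolding head_move_def by blast
  then show "i \<noteq> j" "(p, g, i, 1) \<in> sysM_ports G P pY pN d n i"
      "(p, g, j, 2) \<in> sysM_ports G P pY pN d n j"
    using assms unfolding head_move_def sysM_ports_def by auto
qed

lemma sysM_Int_iff:
  "\<alpha> \<in> sysM_Int G P pY pN d n \<longleftrightarrow>
     (\<exists>p g i j. head_move n p g i j \<and> \<alpha> = {(p, g, i, 1), (p, g, j, 2)})"
proof
  assume "\<alpha> \<in> sysM_Int G P pY pN d n"
  then obtain p g i T where "\<alpha> = {(p, g, i, 1), (p, g, nat (int i + T), 2)}"
    and "p \<in> P - {pY, pN}" "g \<in> G" "T = snd (snd (d p g))"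
    and "i \<le> n + 1" "0 \<le> int i + T" "int i + T \<le> int n + 1"
    unfolding sysM_Int_def by blast
  then have "head_move n p g i (nat (int i + T)) \<and> \<alpha> = {(p, g, i, 1), (p, g, nat (int i + T), 2)}"
    unfolding head_move_def by auto
  then show "\<exists>p g i j. head_move n p g i j \<and> \<alpha> = {(p, g, i, 1), (p, g, j, 2)}" by blast
next
  assume "\<exists>p g i j. head_move n p g i j \<and> \<alpha> = {(p, g, i, 1), (p, g, j, 2)}"
  then obtain p g i j where "head_move n p g i j" and "\<alpha> = {(p, g, i, 1), (p, g, j, 2)}" by blast
  then show "\<alpha> \<in> sysM_Int G P pY pN d n"
    unfolding sysM_Int_def head_move_def
    by (intro CollectI exI[of _ p] exI[of _ g] exI[of _ i] exI[of _ "snd (snd (d p g))"]) auto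
qed

lemma global_step_head_move_iff:
  assumes "head_move n p g i j"
  shows "(q, q') \<in> global_step {0..n + 1} (sysM_ports G P pY pN d n) (sysM_Int G P pY pN d n) Q Tr
             {(p, g, i, 1), (p, g, j, 2)} \<longleftrightarrow>
     q \<in> PiE {0..n + 1} Q \<and> q' \<in> PiE {0..n + 1} Q \<and> (q i, (p, g, i, 1), q' i) \<in> Tr i \<and>
     (q j, (p, g, j, 2), q' j) \<in> Tr j \<and> (\<forall>k \<in> {0..n + 1}. k \<noteq> i \<longrightarrow> k \<noteq> j \<longrightarrow> q k = q' k)"
proof -
  note ports = head_move_ports[OF assms]
  have "{(p, g, i, 1), (p, g, j, 2)} \<inter> sysM_ports G P pY pN d n k =
      (if k = i then {(p, g, i, 1)} else if k = j then {(p, g, j, 2)} else {})" for k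
    using ports sysM_ports_index[of _ G P pY pN d n k] by (auto; fastforce)
  moreover have "{(p, g, i, 1), (p, g, j, 2)} \<in> sysM_Int G P pY pN d n"
    using assms sysM_Int_iff by blast
  moreover have "i \<in> {0..n + 1}" "j \<in> {0..n + 1}"
    using assms unfolding head_move_def by auto
  ultimately show ?thesis
    using ports(1) unfolding global_step_def by (auto split: if_splits)
qed

end

locale lba_run = dtm G S b P p0 pY pN d
  for G S :: "'g set" and b :: 'g and P :: "'p set" and p0 pY pN :: 'p
    and d :: "'p \<Rightarrow> 'g \<Rightarrow> 'p \<times> 'g \<times> int" +
  fixes x :: "'g list"
  assumes linear_bounded: "linear_bounded S b p0 pY pN d"
    and input: "x \<in> lists S"
    and input_nonempty: "length x \<ge> 1"
begin

abbreviation tm_reachable :: "('p, 'g) config \<Rightarrow> bool" where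
  "tm_reachable c \<equiv> (tm_init b p0 x, c) \<in> (tm_step pY pN d)\<^sup>*"

abbreviation sysM_step :: "((nat \<Rightarrow> ('p, 'g) lstate) \<times> (nat \<Rightarrow> ('p, 'g) lstate)) set" where
  "sysM_step \<equiv> \<Union>\<alpha> \<in> sysM_Int G P pY pN d (length x).
     global_step {0..length x + 1} (sysM_ports G P pY pN d (length x))
       (sysM_Int G P pY pN d (length x)) (sysM_Q G P) (sysM_trans G P pY pN d (length x)) \<alpha>"

lemma tm_reachable_closed:
  assumes "tm_reachable (p, t, h)"
  shows "p \<in> P" and "t k \<in> G"
proof -
  have "fst c \<in> P \<and> (\<forall>k. fst (snd c) k \<in> G)" if "tm_reachable c" for c
    using that
  proof (induction rule: rtrancl_induct)
    case base
    have "x ! (nat k - 1) \<in> S" if "1 \<le> k" "k \<le> int (length x)" for k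
      using input that by (simp add: in_listsD)
    then show ?case
      using is_DTM unfolding is_DTM_def tm_init_def by auto
  next
    case (step c c')
    obtain p t h where c: "c = (p, t, h)" by (cases c)
    with step have "p \<in> P - {pY, pN}" "t h \<in> G"
      by (auto simp: tm_step_iff)
    with step c show ?case by (auto simp: tm_step_iff transition_closed)
  qed
  with assms show "p \<in> P" "t k \<in> G" by auto
qed

lemma tm_reachable_head_bounds:
  "tm_reachable (p, t, h) \<Longrightarrow> 0 \<le> h \<and> h \<le> int (length x) + 1"
  using linear_bounded input unfolding linear_bounded_def by blast

lemma config_state_init: "config_state (length x) (tm_init b p0 x) = sysM_init b p0 x"
proof
  fix i
  show "config_state (length x) (tm_init b p0 x) i = sysM_init b p0 x i"
    using input_nonempty by (cases "i \<le> length x") (auto simp: tm_init_def sysM_init_def Let_def)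
qed

lemma tm_step_imp_sysM_step:
  assumes "tm_reachable c" and "(c, c') \<in> tm_step pY pN d"
  shows "(config_state (length x) c, config_state (length x) c') \<in> sysM_step"
proof -
  obtain p t h where c: "c = (p, t, h)" by (cases c)
  define n where "n = length x"
  define g where "g = t h"
  define T where "T = snd (snd (d p g))"
  have c': "c' = (fst (d p g), t(h := fst (snd (d p g))), h + T)" and pP: "p \<in> P - {pY, pN}"
    using assms tm_reachable_closed(1) unfolding c g_def T_def by (auto simp: tm_step_iff)
  have "tm_reachable c'" using assms by (meson rtrancl.rtrancl_into_rtrancl)
  then have bounds: "0 \<le> h" "h + T \<le> int n + 1" "0 \<le> h + T" "h \<le> int n + 1"
    using assms(1) tm_reachable_head_bounds unfolding c c' n_def by blast+
  define i where "i = nat h"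
  define j where "j = nat (h + T)"
  have move: "head_move n p g i j"
    using pP tm_reachable_closed(2) assms(1) bounds
    unfolding head_move_def c g_def T_def i_def j_def by auto
  have "(config_state n c, config_state n c') \<in>
      global_step {0..n + 1} (sysM_ports G P pY pN d n) (sysM_Int G P pY pN d n) (sysM_Q G P)
        (sysM_trans G P pY pN d n) {(p, g, i, 1), (p, g, j, 2)}"
    unfolding global_step_head_move_iff[OF move]
  proof (intro conjI)
    show "config_state n c \<in> PiE {0..n + 1} (sysM_Q G P)"
      "config_state n c' \<in> PiE {0..n + 1} (sysM_Q G P)"
      using \<open>tm_reachable c'\<close> assms(1) tm_reachable_closed unfolding c c'
      by (metis config_state_PiE)+
    show "(config_state n c i, (p, g, i, 1), config_state n c' i) \<in> sysM_trans G P pY pN d n i"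
      "(config_state n c j, (p, g, j, 2), config_state n c' j) \<in> sysM_trans G P pY pN d n j"
      using move bounds head_move_ports[OF move] tm_reachable_closed(2)[OF assms(1)[unfolded c]]
      unfolding sysM_trans_send_iff sysM_trans_receive_iff c c' head_move_def i_def j_def g_def T_def
      by auto
    show "\<forall>k \<in> {0..n + 1}. k \<noteq> i \<longrightarrow> k \<noteq> j \<longrightarrow> config_state n c k = config_state n c' k"
      using bounds unfolding c c' i_def j_def by auto
  qed
  moreover have "{(p, g, i, 1), (p, g, j, 2)} \<in> sysM_Int G P pY pN d n"
    using move sysM_Int_iff by blast
  ultimately show ?thesis unfolding n_def by blast
qed

lemma sysM_step_imp_tm_step:
  assumes "tm_reachable c" and "(config_state (length x) c, q') \<in> sysM_step"
  shows "\<exists>c'. (c, c') \<in> tm_step pY pN d \<and> q' = config_state (length x) c'"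
proof -
  define n where "n = length x"
  obtain p' t h where c: "c = (p', t, h)" by (cases c)
  obtain \<alpha> where \<alpha>_Int: "\<alpha> \<in> sysM_Int G P pY pN d n" and step: "(config_state n c, q') \<in>
      global_step {0..n + 1} (sysM_ports G P pY pN d n) (sysM_Int G P pY pN d n) (sysM_Q G P)
        (sysM_trans G P pY pN d n) \<alpha>"
    using assms(2) unfolding n_def by blast
  obtain p g i j where move: "head_move n p g i j" and \<alpha>: "\<alpha> = {(p, g, i, 1), (p, g, j, 2)}"
    using \<alpha>_Int unfolding sysM_Int_iff by blast
  from step have q'_PiE: "q' \<in> PiE {0..n + 1} (sysM_Q G P)"
    and send: "(config_state n c i, (p, g, i, 1), q' i) \<in> sysM_trans G P pY pN d n i"
    and receive: "(config_state n c j, (p, g, j, 2), q' j) \<in> sysM_trans G P pY pN d n j"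
    and frame: "\<And>k. k \<in> {0..n + 1} \<Longrightarrow> k \<noteq> i \<Longrightarrow> k \<noteq> j \<Longrightarrow> config_state n c k = q' k"
    unfolding \<alpha> global_step_head_move_iff[OF move] by blast+
  have ij: "i \<noteq> j" using head_move_ports[OF move] by blast
  have i: "i \<le> n + 1" and j: "j \<le> n + 1" "int j = int i + snd (snd (d p g))"
    using move unfolding head_move_def by auto
  have "config_state n c i = (Some p, g)" and q'_i: "q' i = (None, fst (snd (d p g)))"
    using send unfolding sysM_trans_send_iff by auto
  then have head: "h = int i" "p' = p" "t h = g"
    using i unfolding c by (auto split: if_splits)
  obtain g' where "config_state n c j = (None, g')" and q'_j: "q' j = (Some (fst (d p g)), g')"
    using receive unfolding sysM_trans_receive_iff by blast
  then have "g' = t (int j)" using j unfolding c by (auto split: if_splits)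
  define c' where "c' = (fst (d p g), t(h := fst (snd (d p g))), h + snd (snd (d p g)))"
  have tm_step: "(c, c') \<in> tm_step pY pN d"
    using move head unfolding c c'_def head_move_def by (auto simp: tm_step_iff)
  have "q' = config_state n c'"
  proof (rule PiE_ext)
    show "q' \<in> PiE {0..n + 1} (sysM_Q G P)" by (fact q'_PiE)
    have "tm_reachable c'" using assms(1) tm_step by (meson rtrancl.rtrancl_into_rtrancl)
    then show "config_state n c' \<in> PiE {0..n + 1} (sysM_Q G P)"
      unfolding c'_def by (intro config_state_PiE) (rule tm_reachable_closed, assumption)+
    fix k
    assume k: "k \<in> {0..n + 1}"
    consider "k = i" | "k = j" | "k \<noteq> i" "k \<noteq> j" by blast
    then show "q' k = config_state n c' k"
    proof cases
      case 1
      with q'_i head i j ij show ?thesis unfolding c'_def by auto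
    next
      case 2
      with q'_j \<open>g' = t (int j)\<close> head j ij show ?thesis unfolding c'_def by auto
    next
      case 3
      then have "q' k = config_state n c k" using frame k by auto
      with 3 k head j show ?thesis unfolding c c'_def by auto
    qed
  qed
  with tm_step show ?thesis unfolding n_def by blast
qed

lemma global_reachable_iff_config_state:
  "global_reachable {0..length x + 1} (sysM_ports G P pY pN d (length x))
     (sysM_Int G P pY pN d (length x)) (sysM_Q G P) (sysM_trans G P pY pN d (length x))
     (sysM_init b p0 x) q \<longleftrightarrow> (\<exists>c. tm_reachable c \<and> q = config_state (length x) c)"
  unfolding global_reachable_def config_state_init[symmetric]
  by (rule rtrancl_simulation_iff) (metis tm_step_imp_sysM_step sysM_step_imp_tm_step)

lemma config_state_has_pY_iff:
  assumes "tm_reachable c"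
  shows "(\<exists>i \<in> {0..length x + 1}. \<exists>g \<in> G. config_state (length x) c i = (Some pY, g))
     \<longleftrightarrow> fst c = pY"
proof -
  obtain p t h where c: "c = (p, t, h)" by (cases c)
  have "0 \<le> h" "h \<le> int (length x) + 1" "t h \<in> G"
    using assms tm_reachable_head_bounds tm_reachable_closed(2) unfolding c by blast+
  then show ?thesis
    unfolding c by (auto split: if_splits intro!: bexI[of _ "nat h"])
qed

end

theorem mainTheorem1:
  fixes G S :: "'g set" and b :: 'g and P :: "'p set" and p0 pY pN :: 'p
    and d :: "'p \<Rightarrow> 'g \<Rightarrow> 'p \<times> 'g \<times> int" and x :: "'g list"
  assumes "is_DTM G S b P p0 pY pN d"
    and "linear_bounded S b p0 pY pN d"
    and "x \<in> lists S"
    and "length x \<ge> 1"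
  shows "tm_accepts b p0 pY pN d x \<longleftrightarrow>
    (\<exists>q. global_reachable {0..length x + 1} (sysM_ports G P pY pN d (length x))
            (sysM_Int G P pY pN d (length x)) (sysM_Q G P)
            (sysM_trans G P pY pN d (length x)) (sysM_init b p0 x) q
         \<and> (\<exists>i \<in> {0..length x + 1}. \<exists>g \<in> G. q i = (Some pY, g)))"
    (is "_ \<longleftrightarrow> ?reaches_pY")
proof -
  interpret lba_run G S b P p0 pY pN d x
    using assms by unfold_locales
  have "tm_accepts b p0 pY pN d x \<longleftrightarrow> (\<exists>c. tm_reachable c \<and> fst c = pY)"
    unfolding tm_accepts_def by (metis fst_conv prod.collapse)
  also have "\<dots> \<longleftrightarrow> (\<exists>c. tm_reachable c \<and>
      (\<exists>i \<in> {0..length x + 1}. \<exists>g \<in> G. config_state (length x) c i = (Some pY, g)))"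
    using config_state_has_pY_iff by blast
  also have "\<dots> \<longleftrightarrow> ?reaches_pY"
    unfolding global_reachable_iff_config_state by blast
  finally show ?thesis .
qed

end
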